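(* Let $n\ge1$. Let $\mathscr{R}_n$ be the lattice, ordered by inclusion, of all sets $\Gamma$ of relations on $[n]=\{1,\dots,n\}$ that are closed under $\{\exists,\forall,\wedge,\vee\}$-FO-definability, and let $\mathscr{F}_n$ be the lattice, ordered by inclusion, of all down-shop-monoids on $[n]$. Then $\mathscr{R}_n$ and $\mathscr{F}_n$ are isomorphic, and the operators $\mathrm{Inv}$ and $\mathrm{shE}$ induce isomorphisms between them.
   Context: $\{\exists,\forall,\wedge,\vee\}$-FO is positive first-order logic without equality. A set $\Gamma$ of relations on $[n]$ is closed under $\{\exists,\forall,\wedge,\vee\}$-FO-definability if every relation definable by a formula of that logic over the structure $([n];\Gamma)$ (with $\Gamma$ as a possibly countably infinite signature) already belongs to $\Gamma$. A multipermutation on $[n]$ is a map $f:[n]\to\mathcal{P}([n])\setminus\{\emptyset\}$ such that every $y$ lies in some $f(x)$. $f$ preserves $R\subseteq[n]^i$ if $(x_1,\dots,x_i)\in R$ and $y_j\in f(x_j)$ imply $(y_1,\dots,y_i)\in R$. $\mathrm{Inv}(F)$ is the set of relations preserved by all $f\in F$; $\mathrm{shE}(\Gamma)$ is the set of multipermutations preserving all relations in $\Gamma$. Composition $g\circ f$ is $x\mapsto\{z:\exists y\,(y\in f(x)\wedge z\in g(y))\}$, $f$ is a sub-multipermutation of $g$ if $f(x)\subseteq g(x)$ for all $x$; a down-shop-monoid (DSM) is a set of multipermutations containing the identity $x\mapsto\{x\}$ and closed under composition and under sub-multipermutations that are multipermutations. *)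

theory Defs
  imports Main
begin

text \<open>The domain is [n] = {1..n}. A relation on [n] is an arity-tagged set of tuples:
  a pair (i, R) with R a set of lists of length i over {1..n}.\<close>

type_synonym rel = "nat \<times> nat list set"

definition is_rel :: "nat \<Rightarrow> rel \<Rightarrow> bool" where
  "is_rel n r \<longleftrightarrow> (\<forall>t \<in> snd r. length t = fst r \<and> set t \<subseteq> {1..n})"

text \<open>Formulas of positive first-order logic without equality over a signature of relations
  (atoms name a relation directly); Top and Bot are the truth constants.\<close>

datatype fm =
    Top
  | Bot
  | Atom rel "nat list"
  | Conj fm fm
  | Disj fm fm
  | Ex nat fm
  | All nat fm

fun fv :: "fm \<Rightarrow> nat set" where
  "fv Top = {}"
| "fv Bot = {}"
| "fv (Atom r vs) = set vs"
| "fv (Conj a b) = fv a \<union> fv b"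
| "fv (Disj a b) = fv a \<union> fv b"
| "fv (Ex x a) = fv a - {x}"
| "fv (All x a) = fv a - {x}"

fun atoms_in :: "rel set \<Rightarrow> fm \<Rightarrow> bool" where
  "atoms_in G Top = True"
| "atoms_in G Bot = True"
| "atoms_in G (Atom r vs) = (r \<in> G \<and> length vs = fst r)"
| "atoms_in G (Conj a b) = (atoms_in G a \<and> atoms_in G b)"
| "atoms_in G (Disj a b) = (atoms_in G a \<and> atoms_in G b)"
| "atoms_in G (Ex x a) = atoms_in G a"
| "atoms_in G (All x a) = atoms_in G a"

fun sat :: "nat \<Rightarrow> fm \<Rightarrow> (nat \<Rightarrow> nat) \<Rightarrow> bool" where
  "sat n Top s = True"
| "sat n Bot s = False"
| "sat n (Atom r vs) s = (map s vs \<in> snd r)"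
| "sat n (Conj a b) s = (sat n a s \<and> sat n b s)"
| "sat n (Disj a b) s = (sat n a s \<or> sat n b s)"
| "sat n (Ex x a) s = (\<exists>v \<in> {1..n}. sat n a (s(x := v)))"
| "sat n (All x a) s = (\<forall>v \<in> {1..n}. sat n a (s(x := v)))"

definition asg :: "nat list \<Rightarrow> nat list \<Rightarrow> nat \<Rightarrow> nat" where
  "asg xs t = (\<lambda>v. case map_of (zip xs t) v of Some a \<Rightarrow> a | None \<Rightarrow> 1)"

definition definable :: "nat \<Rightarrow> rel set \<Rightarrow> rel \<Rightarrow> bool" where
  "definable n G r \<longleftrightarrow>
     (\<exists>\<phi> xs. distinct xs \<and> fv \<phi> \<subseteq> set xs \<and> atoms_in G \<phi> \<and> length xs = fst r \<and>
        snd r = {t. length t = length xs \<and> set t \<subseteq> {1..n} \<and> sat n \<phi> (asg xs t)})"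

definition fo_closed :: "nat \<Rightarrow> rel set \<Rightarrow> bool" where
  "fo_closed n G \<longleftrightarrow> (\<forall>r \<in> G. is_rel n r) \<and> (\<forall>r. definable n G r \<longrightarrow> r \<in> G)"

definition multiperm :: "nat \<Rightarrow> (nat \<Rightarrow> nat set) \<Rightarrow> bool" where
  "multiperm n f \<longleftrightarrow>
     (\<forall>x \<in> {1..n}. f x \<noteq> {} \<and> f x \<subseteq> {1..n}) \<and> (\<forall>x. x \<notin> {1..n} \<longrightarrow> f x = {}) \<and>
     (\<forall>y \<in> {1..n}. \<exists>x \<in> {1..n}. y \<in> f x)"

definition preserves :: "(nat \<Rightarrow> nat set) \<Rightarrow> rel \<Rightarrow> bool" where
  "preserves f r \<longleftrightarrow>
     (\<forall>t \<in> snd r. \<forall>u. list_all2 (\<lambda>y x. y \<in> f x) u t \<longrightarrow> u \<in> snd r)"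

definition Inv :: "nat \<Rightarrow> (nat \<Rightarrow> nat set) set \<Rightarrow> rel set" where
  "Inv n F = {r. is_rel n r \<and> (\<forall>f \<in> F. preserves f r)}"

definition shE :: "nat \<Rightarrow> rel set \<Rightarrow> (nat \<Rightarrow> nat set) set" where
  "shE n G = {f. multiperm n f \<and> (\<forall>r \<in> G. preserves f r)}"

definition mcomp :: "(nat \<Rightarrow> nat set) \<Rightarrow> (nat \<Rightarrow> nat set) \<Rightarrow> nat \<Rightarrow> nat set" where
  "mcomp g f = (\<lambda>x. {z. \<exists>y. y \<in> f x \<and> z \<in> g y})"

definition mid :: "nat \<Rightarrow> nat \<Rightarrow> nat set" where
  "mid n = (\<lambda>x. if x \<in> {1..n} then {x} else {})"

definition DSM :: "nat \<Rightarrow> (nat \<Rightarrow> nat set) set \<Rightarrow> bool" where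
  "DSM n M \<longleftrightarrow>
     (\<forall>f \<in> M. multiperm n f) \<and> mid n \<in> M \<and>
     (\<forall>f \<in> M. \<forall>g \<in> M. mcomp g f \<in> M) \<and>
     (\<forall>g \<in> M. \<forall>f. multiperm n f \<and> (\<forall>x. f x \<subseteq> g x) \<longrightarrow> f \<in> M)"

end

theory Submission
  imports Defs
begin

(* Inv and shE form an antitone Galois connection, so it suffices to show that every
   down-shop-monoid M and every definability-closed set G is Galois closed.

   For M: list the graph of a multipermutation f as pairs (x_k, y_k). The set of images of
   (x_1, ..., x_m) under members of M is preserved by M; if f preserves it too, then
   (y_1, ..., y_m) is such an image, so f lies below a member of M and hence belongs to M.

   For G: let R be preserved by shE G. For a in R, g in [n]^n and ids = (1, ..., n) let
   T be the least relation of G containing the tuple a g ids. Whenever w ids r lies in T,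
   the multipermutation sending each entry of a g ids to the entry of w ids r in the same
   position preserves every relation of G, by minimality of T; so it preserves R, and it
   sends a to w. Therefore R is the disjunction over a in R of
   "forall z. OR_g exists r. T(x, z, r)", a positive formula over G. *)

section \<open>Assignments and derived formulas\<close>

abbreviation tuples :: "nat \<Rightarrow> nat \<Rightarrow> nat list set" where
  "tuples n k \<equiv> {t. length t = k \<and> set t \<subseteq> {1..n}}"

abbreviation moves :: "(nat \<Rightarrow> nat set) \<Rightarrow> nat list \<Rightarrow> nat list \<Rightarrow> bool" where
  "moves f t u \<equiv> list_all2 (\<lambda>y x. y \<in> f x) u t"

fun upd_list :: "(nat \<Rightarrow> nat) \<Rightarrow> nat list \<Rightarrow> nat list \<Rightarrow> nat \<Rightarrow> nat" where
  "upd_list s (v # vs) (x # xs) = upd_list (s(v := x)) vs xs"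
| "upd_list s _ _ = s"

lemma upd_list_notin: "v \<notin> set vs \<Longrightarrow> upd_list s vs t v = s v"
  by (induction s vs t rule: upd_list.induct) auto

lemma map_upd_list: "distinct vs \<Longrightarrow> length t = length vs \<Longrightarrow> map (upd_list s vs t) vs = t"
  by (induction s vs t rule: upd_list.induct) (auto simp: upd_list_notin)

lemma map_upd_list_upd_list:
  assumes "length z = k" "length r = l"
  shows "map (upd_list (upd_list s [i..<i+k] z) [i+k..<i+k+l] r) [0..<i+k+l] = map s [0..<i] @ z @ r"
proof -
  let ?s1 = "upd_list s [i..<i+k] z"
  let ?s2 = "upd_list ?s1 [i+k..<i+k+l] r"
  have "[0..<i+k+l] = [0..<i] @ [i..<i+k] @ [i+k..<i+k+l]"
    by (metis le_add1 le_add2 upt_add_eq_append add.assoc add_0)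
  moreover have "map ?s2 [0..<i] = map s [0..<i]"
    by (simp add: upd_list_notin)
  moreover have "map ?s2 [i..<i+k] = map ?s1 [i..<i+k]"
    by (simp add: upd_list_notin)
  moreover have "map ?s1 [i..<i+k] = z"
    using assms by (simp add: map_upd_list)
  moreover have "map ?s2 [i+k..<i+k+l] = r"
    using assms by (simp add: map_upd_list)
  ultimately show ?thesis by simp
qed

lemma ball_tuples_Suc:
  "(\<forall>t \<in> tuples n (Suc k). P t) \<longleftrightarrow> (\<forall>x \<in> {1..n}. \<forall>t \<in> tuples n k. P (x # t))"
  by (auto simp: length_Suc_conv)

lemma bex_tuples_Suc:
  "(\<exists>t \<in> tuples n (Suc k). P t) \<longleftrightarrow> (\<exists>x \<in> {1..n}. \<exists>t \<in> tuples n k. P (x # t))"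
  by (simp add: length_Suc_conv) (metis insert_subset list.simps(15))

lemma sat_foldr_All:
  "sat n (foldr All vs \<phi>) s \<longleftrightarrow> (\<forall>t \<in> tuples n (length vs). sat n \<phi> (upd_list s vs t))"
proof (induction vs arbitrary: s)
  case (Cons v vs)
  then show ?case
    by (simp only: ball_tuples_Suc length_Cons foldr_Cons o_apply sat.simps upd_list.simps)
qed simp

lemma sat_foldr_Ex:
  "sat n (foldr Ex vs \<phi>) s \<longleftrightarrow> (\<exists>t \<in> tuples n (length vs). sat n \<phi> (upd_list s vs t))"
proof (induction vs arbitrary: s)
  case (Cons v vs)
  then show ?case
    by (simp only: bex_tuples_Suc length_Cons foldr_Cons o_apply sat.simps upd_list.simps)
qed simp

lemma fv_foldr_All: "fv (foldr All vs \<phi>) = fv \<phi> - set vs"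
  by (induction vs) auto

lemma fv_foldr_Ex: "fv (foldr Ex vs \<phi>) = fv \<phi> - set vs"
  by (induction vs) auto

lemma atoms_in_foldr_All: "atoms_in G (foldr All vs \<phi>) = atoms_in G \<phi>"
  by (induction vs) auto

lemma atoms_in_foldr_Ex: "atoms_in G (foldr Ex vs \<phi>) = atoms_in G \<phi>"
  by (induction vs) auto

definition Disjs :: "fm list \<Rightarrow> fm" where
  "Disjs \<phi>s = foldr Disj \<phi>s Bot"

lemma sat_Disjs: "sat n (Disjs \<phi>s) s \<longleftrightarrow> (\<exists>\<phi> \<in> set \<phi>s. sat n \<phi> s)"
  unfolding Disjs_def by (induction \<phi>s) auto

lemma fv_Disjs: "fv (Disjs \<phi>s) = (\<Union>\<phi> \<in> set \<phi>s. fv \<phi>)"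
  unfolding Disjs_def by (induction \<phi>s) auto

lemma atoms_in_Disjs: "atoms_in G (Disjs \<phi>s) \<longleftrightarrow> (\<forall>\<phi> \<in> set \<phi>s. atoms_in G \<phi>)"
  unfolding Disjs_def by (induction \<phi>s) auto

lemma asg_nth: "distinct xs \<Longrightarrow> length t = length xs \<Longrightarrow> j < length xs \<Longrightarrow> asg xs t (xs ! j) = t ! j"
  unfolding asg_def by (simp add: map_of_zip_nth)

lemma asg_upt: "length t = N \<Longrightarrow> p < N \<Longrightarrow> asg [0..<N] t p = t ! p"
  using asg_nth[of "[0..<N]" t p] by simp

lemma map_asg_upt: "length t = N \<Longrightarrow> set ps \<subseteq> {..<N} \<Longrightarrow> map (asg [0..<N] t) ps = map ((!) t) ps"
  by (auto simp: asg_upt)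

lemma map_asg_upt_self: "map (asg [0..<length t] t) [0..<length t] = t"
  using map_asg_upt[of t "length t" "[0..<length t]"] by (simp add: map_nth lessThan_atLeast0)

section \<open>Invariant relations are closed under definability\<close>

lemma multiperm_range: "multiperm n f \<Longrightarrow> y \<in> f x \<Longrightarrow> x \<in> {1..n} \<and> y \<in> {1..n}"
  unfolding multiperm_def by blast

lemma moves_in_range:
  assumes "multiperm n f" "set t \<subseteq> {1..n}" "moves f t u"
  shows "set u \<subseteq> {1..n}"
  using assms unfolding multiperm_def by (fastforce simp: list_all2_conv_all_nth in_set_conv_nth)

lemma sat_preserved:
  assumes f: "multiperm n f" "\<forall>r \<in> G. preserves f r"
  shows "atoms_in G \<phi> \<Longrightarrow> \<forall>v \<in> fv \<phi>. s' v \<in> f (s v) \<Longrightarrow> sat n \<phi> s \<Longrightarrow> sat n \<phi> s'"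
proof (induction \<phi> arbitrary: s s')
  case (Atom r vs)
  then have "moves f (map s vs) (map s' vs)"
    by (simp add: list_all2_map1 list_all2_map2 list_all2_same)
  then show ?case
    using Atom.prems f(2) unfolding preserves_def by auto
next
  case (Ex x \<phi>)
  then obtain v where v: "v \<in> {1..n}" "sat n \<phi> (s(x := v))"
    by auto
  moreover obtain w where w: "w \<in> f v"
    using f(1) v(1) unfolding multiperm_def by blast
  moreover have "\<forall>y \<in> fv \<phi>. (s'(x := w)) y \<in> f ((s(x := v)) y)"
    using Ex.prems(2) w by auto
  ultimately have "sat n \<phi> (s'(x := w))"
    using Ex.IH Ex.prems(1) by (metis atoms_in.simps(6))
  moreover have "w \<in> {1..n}"
    using f(1) v(1) w unfolding multiperm_def by blast
  ultimately show ?case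
    by auto
next
  case (All x \<phi>)
  show ?case
  proof (simp only: sat.simps, intro ballI)
    fix w assume "w \<in> {1..n}"
    then obtain v where "v \<in> {1..n}" "w \<in> f v"
      using f(1) unfolding multiperm_def by blast
    moreover have "\<forall>y \<in> fv \<phi>. (s'(x := w)) y \<in> f ((s(x := v)) y)"
      using All.prems(2) \<open>w \<in> f v\<close> by auto
    ultimately show "sat n \<phi> (s'(x := w))"
      using All.IH All.prems(1,3) \<open>v \<in> {1..n}\<close> by (metis atoms_in.simps(7) sat.simps(7))
  qed
qed (simp; blast)+

lemma fo_closed_Inv:
  assumes F: "\<forall>f \<in> F. multiperm n f"
  shows "fo_closed n (Inv n F)"
  unfolding fo_closed_def
proof (intro conjI ballI allI impI)
  fix r assume "r \<in> Inv n F"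
  then show "is_rel n r" unfolding Inv_def by auto
next
  fix r assume "definable n (Inv n F) r"
  then obtain \<phi> xs where xs: "distinct xs" "fv \<phi> \<subseteq> set xs" "length xs = fst r"
    and \<phi>: "atoms_in (Inv n F) \<phi>"
    and r: "snd r = {t. length t = length xs \<and> set t \<subseteq> {1..n} \<and> sat n \<phi> (asg xs t)}"
    unfolding definable_def by blast
  have "preserves f r" if "f \<in> F" for f
    unfolding preserves_def
  proof (intro ballI allI impI)
    fix t u assume "t \<in> snd r" and tu: "moves f t u"
    then have t: "length t = length xs" "set t \<subseteq> {1..n}" "sat n \<phi> (asg xs t)"
      using r by auto
    have u: "length u = length xs" "set u \<subseteq> {1..n}"
      using moves_in_range[OF _ t(2) tu] F \<open>f \<in> F\<close> t(1) tu by (auto dest: list_all2_lengthD)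
    have "\<forall>v \<in> fv \<phi>. asg xs u v \<in> f (asg xs t v)"
    proof
      fix v assume "v \<in> fv \<phi>"
      then obtain j where "j < length xs" "v = xs ! j"
        using xs(2) by (metis in_set_conv_nth subsetD)
      then show "asg xs u v \<in> f (asg xs t v)"
        using tu t(1) u(1) by (simp add: asg_nth[OF xs(1)] list_all2_conv_all_nth)
    qed
    then have "sat n \<phi> (asg xs u)"
      using sat_preserved[of n f "Inv n F" \<phi>] F \<open>f \<in> F\<close> \<phi> t(3) unfolding Inv_def by blast
    then show "u \<in> snd r"
      using r u by auto
  qed
  moreover have "is_rel n r"
    unfolding is_rel_def r using xs by auto
  ultimately show "r \<in> Inv n F"
    unfolding Inv_def by auto
qed

section \<open>Down-shop-monoids are Galois closed\<close>

lemma multiperm_mid: "multiperm n (mid n)"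
  unfolding multiperm_def mid_def by auto

lemma multiperm_mcomp:
  assumes f: "multiperm n f" and g: "multiperm n g"
  shows "multiperm n (mcomp g f)"
  unfolding multiperm_def
proof (intro conjI ballI allI impI)
  fix x assume x: "x \<in> {1..n}"
  then obtain y where "y \<in> f x" "y \<in> {1..n}"
    using f unfolding multiperm_def by blast
  moreover obtain z where "z \<in> g y"
    using g \<open>y \<in> {1..n}\<close> unfolding multiperm_def by blast
  ultimately show "mcomp g f x \<noteq> {}"
    unfolding mcomp_def by blast
  show "mcomp g f x \<subseteq> {1..n}"
    using f g x unfolding multiperm_def mcomp_def by blast
next
  fix x assume "x \<notin> {1..n}"
  then show "mcomp g f x = {}"
    using f unfolding multiperm_def mcomp_def by blast
next
  fix z assume "z \<in> {1..n}"
  then obtain y where "y \<in> {1..n}" "z \<in> g y"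
    using g unfolding multiperm_def by blast
  moreover obtain x where "x \<in> {1..n}" "y \<in> f x"
    using f \<open>y \<in> {1..n}\<close> unfolding multiperm_def by blast
  ultimately show "\<exists>x \<in> {1..n}. z \<in> mcomp g f x"
    unfolding mcomp_def by blast
qed

lemma moves_mid: "set t \<subseteq> {1..n} \<Longrightarrow> moves (mid n) t u \<longleftrightarrow> u = t"
  by (induction t arbitrary: u) (auto simp: mid_def list_all2_Cons2)

lemma moves_mcompI:
  assumes "moves f t w" "moves g w u"
  shows "moves (mcomp g f) t u"
  by (rule list_all2_trans[OF _ assms(2,1)]) (auto simp: mcomp_def)

lemma moves_mcompE:
  "moves (mcomp g f) t u \<Longrightarrow> \<exists>w. moves f t w \<and> moves g w u"
proof (induction rule: list_all2_induct)
  case (Cons z u x t)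
  then obtain w where "moves f t w" "moves g w u"
    by blast
  moreover obtain y where "y \<in> f x" "z \<in> g y"
    using Cons.hyps(1) unfolding mcomp_def by auto
  ultimately show ?case
    by (intro exI[of _ "y # w"]) auto
qed simp

lemma preserves_mid: "is_rel n r \<Longrightarrow> preserves (mid n) r"
  unfolding preserves_def is_rel_def using moves_mid by metis

lemma preserves_mcomp: "preserves f r \<Longrightarrow> preserves g r \<Longrightarrow> preserves (mcomp g f) r"
  unfolding preserves_def by (metis moves_mcompE)

lemma preserves_submultiperm:
  assumes "preserves g r" "\<forall>x. f x \<subseteq> g x"
  shows "preserves f r"
proof -
  have "moves g t u" if "moves f t u" for t u
    using that assms(2) by (metis (no_types, lifting) list_all2_mono subsetD)
  then show ?thesis
    using assms(1) unfolding preserves_def by blast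
qed

lemma DSM_shE:
  assumes "\<forall>r \<in> G. is_rel n r"
  shows "DSM n (shE n G)"
  unfolding DSM_def shE_def
  using assms multiperm_mid multiperm_mcomp preserves_mid preserves_mcomp preserves_submultiperm
  by (intro conjI ballI allI impI CollectI) auto

lemma DSM_multiperm: "DSM n M \<Longrightarrow> f \<in> M \<Longrightarrow> multiperm n f"
  unfolding DSM_def by blast

lemma DSM_mid: "DSM n M \<Longrightarrow> mid n \<in> M"
  unfolding DSM_def by blast

lemma DSM_mcomp: "DSM n M \<Longrightarrow> f \<in> M \<Longrightarrow> g \<in> M \<Longrightarrow> mcomp g f \<in> M"
  unfolding DSM_def by blast

lemma DSM_submultiperm:
  "DSM n M \<Longrightarrow> g \<in> M \<Longrightarrow> multiperm n f \<Longrightarrow> \<forall>x. f x \<subseteq> g x \<Longrightarrow> f \<in> M"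
  unfolding DSM_def by blast

definition orbit_rel :: "(nat \<Rightarrow> nat set) set \<Rightarrow> nat list \<Rightarrow> rel" where
  "orbit_rel M t = (length t, {u. \<exists>g \<in> M. moves g t u})"

lemma orbit_rel_Inv:
  assumes M: "DSM n M" and t: "set t \<subseteq> {1..n}"
  shows "orbit_rel M t \<in> Inv n M"
proof -
  have "length u = length t \<and> set u \<subseteq> {1..n}" if "g \<in> M" "moves g t u" for g u
    using that M moves_in_range[OF DSM_multiperm t] by (auto dest: list_all2_lengthD)
  then have "is_rel n (orbit_rel M t)"
    unfolding orbit_rel_def is_rel_def by auto
  moreover have "preserves h (orbit_rel M t)" if "h \<in> M" for h
  proof -
    have "\<exists>g' \<in> M. moves g' t v" if "g \<in> M" "moves g t u" "moves h u v" for g u v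
      using DSM_mcomp[OF M] \<open>h \<in> M\<close> that moves_mcompI by blast
    then show ?thesis
      unfolding orbit_rel_def preserves_def by auto
  qed
  ultimately show ?thesis
    unfolding Inv_def by blast
qed

lemma moves_map_fst_snd: "moves g (map fst ps) (map snd ps) \<longleftrightarrow> (\<forall>(x, y) \<in> set ps. y \<in> g x)"
  by (auto simp: list_all2_map1 list_all2_map2 list_all2_same)

lemma shE_Inv_DSM:
  assumes M: "DSM n M"
  shows "shE n (Inv n M) = M"
proof
  show "M \<subseteq> shE n (Inv n M)"
    using DSM_multiperm[OF M] unfolding shE_def Inv_def by auto
next
  show "shE n (Inv n M) \<subseteq> M"
  proof
    fix f assume f: "f \<in> shE n (Inv n M)"
    then have mp: "multiperm n f"
      unfolding shE_def by auto
    define ps where "ps = filter (\<lambda>(x, y). y \<in> f x) (List.product [1..<Suc n] [1..<Suc n])"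
    have graph: "set ps = {(x, y). y \<in> f x}"
      using multiperm_range[OF mp] unfolding ps_def by fastforce
    let ?t = "map fst ps"
    have t: "set ?t \<subseteq> {1..n}"
      unfolding ps_def by auto
    have "preserves f (orbit_rel M ?t)"
      using f orbit_rel_Inv[OF M t] unfolding shE_def by blast
    moreover have "?t \<in> snd (orbit_rel M ?t)"
      using DSM_mid[OF M] moves_mid[OF t] unfolding orbit_rel_def by auto
    moreover have "moves f ?t (map snd ps)"
      using graph by (simp add: moves_map_fst_snd)
    ultimately obtain g where "g \<in> M" "moves g ?t (map snd ps)"
      unfolding preserves_def orbit_rel_def by auto
    then show "f \<in> M"
      using DSM_submultiperm[OF M _ mp] graph by (auto simp: moves_map_fst_snd subset_iff)
  qed
qed

section \<open>Definability-closed sets are Galois closed\<close>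

lemma fo_closed_definable_upt:
  assumes "fo_closed n G" "atoms_in G \<phi>" "fv \<phi> \<subseteq> {..<N}"
  shows "(N, {t. length t = N \<and> set t \<subseteq> {1..n} \<and> sat n \<phi> (asg [0..<N] t)}) \<in> G"
proof -
  have "definable n G (N, {t. length t = N \<and> set t \<subseteq> {1..n} \<and> sat n \<phi> (asg [0..<N] t)})"
    unfolding definable_def using assms(2,3) by (intro exI[of _ \<phi>] exI[of _ "[0..<N]"]) auto
  then show ?thesis
    using assms(1) unfolding fo_closed_def by blast
qed

lemma fo_closed_subset_tuples: "fo_closed n G \<Longrightarrow> (N, X) \<in> G \<Longrightarrow> X \<subseteq> tuples n N"
  unfolding fo_closed_def is_rel_def by fastforce

lemma fo_closed_tuples: "fo_closed n G \<Longrightarrow> (N, tuples n N) \<in> G"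
  using fo_closed_definable_upt[of n G Top N] by simp

lemma fo_closed_Int:
  assumes G: "fo_closed n G" and "(N, X) \<in> G" "(N, Y) \<in> G"
  shows "(N, X \<inter> Y) \<in> G"
proof -
  let ?\<phi> = "Conj (Atom (N, X) [0..<N]) (Atom (N, Y) [0..<N])"
  have "(N, {t. length t = N \<and> set t \<subseteq> {1..n} \<and> sat n ?\<phi> (asg [0..<N] t)}) \<in> G"
    using assms by (intro fo_closed_definable_upt) auto
  moreover have "{t. length t = N \<and> set t \<subseteq> {1..n} \<and> sat n ?\<phi> (asg [0..<N] t)} = X \<inter> Y"
    using fo_closed_subset_tuples[OF G \<open>(N, X) \<in> G\<close>] by (auto simp: map_asg_upt_self)
  ultimately show ?thesis
    by simp
qed

lemma fo_closed_Inter: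
  assumes G: "fo_closed n G"
  shows "finite \<X> \<Longrightarrow> \<X> \<noteq> {} \<Longrightarrow> \<forall>X \<in> \<X>. (N, X) \<in> G \<Longrightarrow> (N, \<Inter>\<X>) \<in> G"
  by (induction \<X> rule: finite_ne_induct) (simp_all add: fo_closed_Int[OF G])

lemma fo_closed_reindex:
  assumes G: "fo_closed n G" and S: "S \<in> G" "length ps = fst S" and ps: "set ps \<subseteq> {..<N}"
  shows "(N, {t \<in> tuples n N. map ((!) t) ps \<in> snd S}) \<in> G"
proof -
  have "(N, {t. length t = N \<and> set t \<subseteq> {1..n} \<and> sat n (Atom S ps) (asg [0..<N] t)}) \<in> G"
    using assms by (intro fo_closed_definable_upt) auto
  moreover have "sat n (Atom S ps) (asg [0..<N] t) \<longleftrightarrow> map ((!) t) ps \<in> snd S" if "length t = N" for t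
    using that ps by (simp add: map_asg_upt)
  ultimately show ?thesis
    by (simp cong: conj_cong)
qed

definition least_rel :: "rel set \<Rightarrow> nat list \<Rightarrow> rel" where
  "least_rel G t = (length t, \<Inter>{X. (length t, X) \<in> G \<and> t \<in> X})"

lemma least_rel_in:
  assumes G: "fo_closed n G" and t: "set t \<subseteq> {1..n}"
  shows "least_rel G t \<in> G"
  unfolding least_rel_def
proof (rule fo_closed_Inter[OF G])
  have "{X. (length t, X) \<in> G \<and> t \<in> X} \<subseteq> Pow (tuples n (length t))"
    using fo_closed_subset_tuples[OF G] by blast
  then show "finite {X. (length t, X) \<in> G \<and> t \<in> X}"
    using finite_lists_length_eq[of "{1..n}" "length t"] by (simp add: conj_commute finite_subset)
  show "{X. (length t, X) \<in> G \<and> t \<in> X} \<noteq> {}"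
    using fo_closed_tuples[OF G] t by blast
qed auto

lemma mem_least_rel_self: "t \<in> snd (least_rel G t)"
  unfolding least_rel_def by auto

definition tuple_mfun :: "nat \<Rightarrow> nat list \<Rightarrow> nat list \<Rightarrow> nat \<Rightarrow> nat set" where
  "tuple_mfun n t u = (\<lambda>x. if x \<in> {1..n} then {u ! p | p. p < length t \<and> t ! p = x} else {})"

lemma moves_tuple_mfun_positions:
  "moves (tuple_mfun n t u) s s' \<Longrightarrow>
     \<exists>ps. set ps \<subseteq> {..<length t} \<and> map ((!) t) ps = s \<and> map ((!) u) ps = s'"
proof (induction rule: list_all2_induct)
  case Nil
  show ?case by simp
next
  case (Cons y s' x s)
  then obtain ps where "set ps \<subseteq> {..<length t}" "map ((!) t) ps = s" "map ((!) u) ps = s'"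
    by blast
  moreover obtain p where "p < length t" "t ! p = x" "u ! p = y"
    using Cons.hyps(1) unfolding tuple_mfun_def by (auto split: if_splits)
  ultimately show ?case
    by (intro exI[of _ "p # ps"]) auto
qed

lemma preserves_tuple_mfun:
  assumes G: "fo_closed n G" and t: "set t \<subseteq> {1..n}" and u: "u \<in> snd (least_rel G t)"
    and S: "S \<in> G"
  shows "preserves (tuple_mfun n t u) S"
  unfolding preserves_def
proof (intro ballI allI impI)
  fix s s' assume s: "s \<in> snd S" and "moves (tuple_mfun n t u) s s'"
  then obtain ps where ps: "set ps \<subseteq> {..<length t}" "map ((!) t) ps = s" "map ((!) u) ps = s'"
    using moves_tuple_mfun_positions by blast
  have "length ps = fst S"
    using G S s ps(2) unfolding fo_closed_def is_rel_def by force
  then have "(length t, {v \<in> tuples n (length t). map ((!) v) ps \<in> snd S}) \<in> G"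
    using fo_closed_reindex[OF G S _ ps(1)] by blast
  moreover have "t \<in> {v \<in> tuples n (length t). map ((!) v) ps \<in> snd S}"
    using t s ps(2) by simp
  ultimately have "u \<in> {v \<in> tuples n (length t). map ((!) v) ps \<in> snd S}"
    using u unfolding least_rel_def by auto
  then show "s' \<in> snd S"
    using ps(3) by simp
qed

lemma multiperm_tuple_mfun:
  assumes "length u = length t" "set t = {1..n}" "set u = {1..n}"
  shows "multiperm n (tuple_mfun n t u)"
  unfolding multiperm_def
proof (intro conjI ballI allI impI)
  fix x assume x: "x \<in> {1..n}"
  then obtain p where "p < length t" "t ! p = x"
    using assms(2) by (metis in_set_conv_nth)
  then show "tuple_mfun n t u x \<noteq> {}"
    using x unfolding tuple_mfun_def by auto
  show "tuple_mfun n t u x \<subseteq> {1..n}"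
  proof
    fix y assume "y \<in> tuple_mfun n t u x"
    then obtain p where "p < length u" "y = u ! p"
      using x assms(1) unfolding tuple_mfun_def by auto
    then show "y \<in> {1..n}"
      using assms(3) nth_mem by blast
  qed
next
  fix x assume "x \<notin> {1..n}"
  then show "tuple_mfun n t u x = {}"
    unfolding tuple_mfun_def by (rule if_not_P)
next
  fix y assume "y \<in> {1..n}"
  then obtain p where "p < length t" "u ! p = y"
    using assms(1,3) by (metis in_set_conv_nth)
  moreover have "t ! p \<in> {1..n}"
    using assms(2) calculation(1) by (metis nth_mem)
  ultimately show "\<exists>x \<in> {1..n}. y \<in> tuple_mfun n t u x"
    unfolding tuple_mfun_def by auto
qed

lemma moves_tuple_mfun_prefix:
  assumes "length w = length a" "set a \<subseteq> {1..n}"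
  shows "moves (tuple_mfun n (a @ b) (w @ c)) a w"
  using assms unfolding tuple_mfun_def list_all2_conv_all_nth
  by (force simp: nth_append dest: nth_mem)

text \<open>The variables of \<open>cover_fm n G a\<close> are \<open>x = 0..<i\<close>, \<open>z = i..<i+n\<close> and
  \<open>r = i+n..<i+2n\<close>, where \<open>i = length a\<close>. Instantiating \<open>z\<close> by \<open>(1..n)\<close> makes the
  multipermutation read off a satisfying tuple surjective; the block \<open>r\<close> opposite
  \<open>(1..n)\<close> in the source tuple makes it total.\<close>

definition cover_fm :: "nat \<Rightarrow> rel set \<Rightarrow> nat list \<Rightarrow> fm" where
  "cover_fm n G a =
     (let i = length a; N = i + n + n; ids = [1..<Suc n] in
      foldr All [i..<i + n] (Disjs (map (\<lambda>g. foldr Ex [i + n..<N] (Atom (least_rel G (a @ g @ ids)) [0..<N]))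
        (List.n_lists n ids))))"

lemma sat_cover_fm:
  assumes "length w = length a"
  shows "sat n (cover_fm n G a) (asg [0..<length a] w) \<longleftrightarrow>
    (\<forall>z \<in> tuples n n. \<exists>g \<in> tuples n n. \<exists>r \<in> tuples n n.
       w @ z @ r \<in> snd (least_rel G (a @ g @ [1..<Suc n])))"
proof -
  have "map (asg [0..<length a] w) [0..<length a] = w"
    using map_asg_upt_self assms by metis
  then show ?thesis
    by (simp add: cover_fm_def Let_def sat_foldr_All sat_Disjs sat_foldr_Ex set_n_lists
        map_upd_list_upd_list atLeastLessThanSuc_atLeastAtMost del: upt_Suc)
qed

lemma sat_cover_fm_self: "sat n (cover_fm n G a) (asg [0..<length a] a)"
  unfolding sat_cover_fm[OF refl]
proof
  fix z assume "z \<in> tuples n n"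
  moreover have "[1..<Suc n] \<in> tuples n n"
    by auto
  ultimately show "\<exists>g \<in> tuples n n. \<exists>r \<in> tuples n n. a @ z @ r \<in> snd (least_rel G (a @ g @ [1..<Suc n]))"
    using mem_least_rel_self by blast
qed

lemma fv_cover_fm: "fv (cover_fm n G a) \<subseteq> {..<length a}"
  by (auto simp: cover_fm_def Let_def fv_foldr_All fv_foldr_Ex fv_Disjs)

lemma atoms_in_cover_fm:
  assumes "fo_closed n G" "set a \<subseteq> {1..n}"
  shows "atoms_in G (cover_fm n G a)"
proof -
  have "least_rel G (a @ g @ [1..<Suc n]) \<in> G" if "set g \<subseteq> {1..n}" for g
    using assms that by (intro least_rel_in) auto
  then show ?thesis
    by (auto simp: cover_fm_def Let_def atoms_in_foldr_All atoms_in_foldr_Ex atoms_in_Disjs set_n_lists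
        least_rel_def atLeastLessThanSuc_atLeastAtMost simp del: upt_Suc)
qed

lemma cover_fm_sound:
  assumes G: "fo_closed n G" and R: "R \<in> Inv n (shE n G)" and a: "a \<in> snd R"
    and w: "w \<in> tuples n (length a)" and sat: "sat n (cover_fm n G a) (asg [0..<length a] w)"
  shows "w \<in> snd R"
proof -
  let ?ids = "[1..<Suc n]"
  have "\<forall>z \<in> tuples n n. \<exists>g \<in> tuples n n. \<exists>r \<in> tuples n n.
      w @ z @ r \<in> snd (least_rel G (a @ g @ ?ids))"
    using sat w sat_cover_fm[of w a] by blast
  moreover have ids: "?ids \<in> tuples n n"
    by auto
  ultimately obtain g r where g: "g \<in> tuples n n" and r: "r \<in> tuples n n"
    and least: "w @ ?ids @ r \<in> snd (least_rel G (a @ g @ ?ids))"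
    by blast
  have a_range: "set a \<subseteq> {1..n}"
    using R a unfolding Inv_def is_rel_def by auto
  have src: "set (a @ g @ ?ids) \<subseteq> {1..n}"
    using a_range g by auto
  let ?f = "tuple_mfun n (a @ g @ ?ids) (w @ ?ids @ r)"
  have "multiperm n ?f"
    using a_range g r w by (intro multiperm_tuple_mfun) auto
  moreover have "\<forall>S \<in> G. preserves ?f S"
    using preserves_tuple_mfun[OF G src least] by blast
  ultimately have "preserves ?f R"
    using R unfolding shE_def Inv_def by blast
  moreover have "moves ?f a w"
    using w a_range by (intro moves_tuple_mfun_prefix) auto
  ultimately show ?thesis
    using a unfolding preserves_def by blast
qed

lemma Inv_shE_fo_closed:
  assumes G: "fo_closed n G"
  shows "Inv n (shE n G) = G"
proof
  show "G \<subseteq> Inv n (shE n G)"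
    using G unfolding fo_closed_def Inv_def shE_def by blast
next
  show "Inv n (shE n G) \<subseteq> G"
  proof
    fix R assume R: "R \<in> Inv n (shE n G)"
    then have R_tuples: "snd R \<subseteq> tuples n (fst R)"
      unfolding Inv_def is_rel_def by auto
    then have "finite (snd R)"
      using finite_lists_length_eq[of "{1..n}" "fst R"] by (simp add: conj_commute finite_subset)
    then obtain as where as: "set as = snd R"
      using finite_list by blast
    have fv_as: "fv (cover_fm n G a) \<subseteq> set [0..<fst R]" if "a \<in> set as" for a
    proof -
      have "length a = fst R"
        using R_tuples as that by auto
      then show ?thesis
        using fv_cover_fm[of n G a] by auto
    qed
    let ?\<Phi> = "Disjs (map (cover_fm n G) as)"
    have "atoms_in G ?\<Phi>"
      using atoms_in_cover_fm[OF G] R_tuples as by (auto simp: atoms_in_Disjs)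
    moreover have "fv ?\<Phi> \<subseteq> set [0..<fst R]"
      using fv_as by (auto simp: fv_Disjs)
    moreover have "snd R = {w. length w = fst R \<and> set w \<subseteq> {1..n} \<and> sat n ?\<Phi> (asg [0..<fst R] w)}"
    proof (intro set_eqI iffI)
      fix w assume w: "w \<in> snd R"
      then have "length w = fst R" "set w \<subseteq> {1..n}"
        using R_tuples by auto
      moreover have "sat n ?\<Phi> (asg [0..<fst R] w)"
        using sat_cover_fm_self[of n G w] w as calculation(1) by (auto simp: sat_Disjs)
      ultimately show "w \<in> {w. length w = fst R \<and> set w \<subseteq> {1..n} \<and> sat n ?\<Phi> (asg [0..<fst R] w)}"
        by blast
    next
      fix w assume w: "w \<in> {w. length w = fst R \<and> set w \<subseteq> {1..n} \<and> sat n ?\<Phi> (asg [0..<fst R] w)}"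
      then obtain a where a: "a \<in> snd R" and "sat n (cover_fm n G a) (asg [0..<fst R] w)"
        using as by (auto simp: sat_Disjs)
      moreover have "length a = fst R"
        using R_tuples a by auto
      ultimately show "w \<in> snd R"
        using cover_fm_sound[OF G R a] w by auto
    qed
    ultimately have "definable n G R"
      unfolding definable_def by (intro exI[of _ ?\<Phi>] exI[of _ "[0..<fst R]"]) auto
    then show "R \<in> G"
      using G unfolding fo_closed_def by blast
  qed
qed

section \<open>The Galois correspondence\<close>

lemma Inv_antimono: "F1 \<subseteq> F2 \<Longrightarrow> Inv n F2 \<subseteq> Inv n F1"
  unfolding Inv_def by blast

lemma shE_antimono: "G1 \<subseteq> G2 \<Longrightarrow> shE n G2 \<subseteq> shE n G1"
  unfolding shE_def by blast

theorem corollary2p6: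
  fixes n :: nat
  assumes "n \<ge> 1"
  shows "bij_betw (Inv n) {M. DSM n M} {G. fo_closed n G}
       \<and> bij_betw (shE n) {G. fo_closed n G} {M. DSM n M}
       \<and> (\<forall>M. DSM n M \<longrightarrow> shE n (Inv n M) = M)
       \<and> (\<forall>G. fo_closed n G \<longrightarrow> Inv n (shE n G) = G)
       \<and> (\<forall>M1 M2. DSM n M1 \<and> DSM n M2 \<longrightarrow> (M1 \<subseteq> M2 \<longleftrightarrow> Inv n M2 \<subseteq> Inv n M1))
       \<and> (\<forall>G1 G2. fo_closed n G1 \<and> fo_closed n G2 \<longrightarrow> (G1 \<subseteq> G2 \<longleftrightarrow> shE n G2 \<subseteq> shE n G1))"
proof -
  have shE_Inv: "\<forall>M \<in> {M. DSM n M}. shE n (Inv n M) = M"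
    using shE_Inv_DSM by blast
  have Inv_shE: "\<forall>G \<in> {G. fo_closed n G}. Inv n (shE n G) = G"
    using Inv_shE_fo_closed by blast
  have Inv_closed: "Inv n ` {M. DSM n M} \<subseteq> {G. fo_closed n G}"
    using fo_closed_Inv DSM_multiperm by blast
  have shE_DSM: "shE n ` {G. fo_closed n G} \<subseteq> {M. DSM n M}"
    using DSM_shE unfolding fo_closed_def by blast
  have "M1 \<subseteq> M2 \<longleftrightarrow> Inv n M2 \<subseteq> Inv n M1" if "DSM n M1" "DSM n M2" for M1 M2
    using Inv_antimono shE_antimono[of "Inv n M2" "Inv n M1"] shE_Inv_DSM that by metis
  moreover have "G1 \<subseteq> G2 \<longleftrightarrow> shE n G2 \<subseteq> shE n G1" if "fo_closed n G1" "fo_closed n G2" for G1 G2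
    using shE_antimono Inv_antimono[of "shE n G2" "shE n G1"] Inv_shE_fo_closed that by metis
  ultimately show ?thesis
    using bij_betw_byWitness[OF shE_Inv Inv_shE Inv_closed shE_DSM]
      bij_betw_byWitness[OF Inv_shE shE_Inv shE_DSM Inv_closed] shE_Inv Inv_shE by blast
qed

end
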